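(* Let $\varphi$ be a quantifier-free Presburger formula with exactly one free variable. Then $|\varphi|_{\mathsf{p}}\le 2^{|\varphi|}$.
   Context: Quantifier-free Presburger formulas are Boolean combinations of atoms $\sum a_ix_i\le b$ and $\sum a_ix_i\equiv b\pmod c$, integer constants written in binary; $|\varphi|$ is the number of symbols needed to write $\varphi$ (constants in binary). A set $S\subseteq\mathbb{Z}$ is ultimately periodic if there are $n_0,p\in\mathbb{N}$, $p\ge1$, such that for all $n\in\mathbb{Z}$ with $|n|\ge n_0$, $n+p\in S$ iff $n\in S$; such $p$ is a period of $S$. Every Presburger formula with one free variable defines an ultimately periodic set, and $|\varphi|_{\mathsf{p}}$ denotes the smallest period of the set defined by $\varphi$. *)

theory Defs
  imports Main
begin

text \<open>A linear term sum a_i x_i is a list of pairs (coefficient, variable index).\<close>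
type_synonym lterm = "(int \<times> nat) list"

datatype qf_pres =
    Le lterm int
  | Cong lterm int nat
  | Neg qf_pres
  | Conj qf_pres qf_pres
  | Disj qf_pres qf_pres

definition tval :: "lterm \<Rightarrow> (nat \<Rightarrow> int) \<Rightarrow> int" where
  "tval t \<sigma> = (\<Sum>(a, i)\<leftarrow>t. a * \<sigma> i)"

fun sat :: "qf_pres \<Rightarrow> (nat \<Rightarrow> int) \<Rightarrow> bool" where
  "sat (Le t b) \<sigma> = (tval t \<sigma> \<le> b)"
| "sat (Cong t b c) \<sigma> = (tval t \<sigma> mod int c = b mod int c)"
| "sat (Neg \<phi>) \<sigma> = (\<not> sat \<phi> \<sigma>)"
| "sat (Conj \<phi> \<psi>) \<sigma> = (sat \<phi> \<sigma> \<and> sat \<psi> \<sigma>)"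
| "sat (Disj \<phi> \<psi>) \<sigma> = (sat \<phi> \<sigma> \<or> sat \<psi> \<sigma>)"

fun fv :: "qf_pres \<Rightarrow> nat set" where
  "fv (Le t b) = snd ` set t"
| "fv (Cong t b c) = snd ` set t"
| "fv (Neg \<phi>) = fv \<phi>"
| "fv (Conj \<phi> \<psi>) = fv \<phi> \<union> fv \<psi>"
| "fv (Disj \<phi> \<psi>) = fv \<phi> \<union> fv \<psi>"

fun bitlen :: "nat \<Rightarrow> nat" where
  "bitlen n = (if n < 2 then 1 else Suc (bitlen (n div 2)))"

definition isize :: "int \<Rightarrow> nat" where
  "isize a = bitlen (nat \<bar>a\<bar>) + (if a < 0 then 1 else 0)"

text \<open>Each summand a x_i costs the digits of a plus one symbol for the variable,
  plus one symbol per summand for the separating plus signs.\<close>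
definition tsize :: "lterm \<Rightarrow> nat" where
  "tsize t = (\<Sum>(a, i)\<leftarrow>t. isize a + 2)"

fun size_f :: "qf_pres \<Rightarrow> nat" where
  "size_f (Le t b) = tsize t + 1 + isize b"
| "size_f (Cong t b c) = tsize t + 1 + isize b + 1 + bitlen c"
| "size_f (Neg \<phi>) = 1 + size_f \<phi>"
| "size_f (Conj \<phi> \<psi>) = 1 + size_f \<phi> + size_f \<psi>"
| "size_f (Disj \<phi> \<psi>) = 1 + size_f \<phi> + size_f \<psi>"

definition is_period :: "int set \<Rightarrow> nat \<Rightarrow> bool" where
  "is_period S p \<longleftrightarrow> p \<ge> 1 \<and>
     (\<exists>n0::nat. \<forall>n::int. \<bar>n\<bar> \<ge> int n0 \<longrightarrow> (n + int p \<in> S \<longleftrightarrow> n \<in> S))"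

definition ult_periodic :: "int set \<Rightarrow> bool" where
  "ult_periodic S \<longleftrightarrow> (\<exists>p. is_period S p)"

definition min_period :: "int set \<Rightarrow> nat" where
  "min_period S = (LEAST p. is_period S p)"

definition defined_set :: "qf_pres \<Rightarrow> nat \<Rightarrow> int set" where
  "defined_set \<phi> v = {n. sat \<phi> (\<lambda>i. if i = v then n else 0)}"

end

theory Submission
  imports Defs
begin

text \<open>A single-variable inequality or equation defines a set that is constant on all
  sufficiently large and on all sufficiently small integers, so it has period 1; a congruence
  modulo c > 0 has period c < 2^(bitlen c). Complementation keeps a period, and a Boolean
  combination of sets with periods p and q has period p q. Since the size of a conjunction or
  disjunction exceeds the sum of the sizes of its parts, the bound 2^size multiplies along the
  induction.\<close>

lemma is_period_ge_1: "is_period S p \<Longrightarrow> 1 \<le> p"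
  by (simp add: is_period_def)

lemma min_period_le: "is_period S p \<Longrightarrow> min_period S \<le> p"
  unfolding min_period_def by (rule Least_le)

lemma is_period_mult:
  assumes "is_period S p" "1 \<le> k"
  shows "is_period S (p * k)"
proof -
  from assms(1) obtain n0 where p: "1 \<le> p"
    and n0: "\<And>n::int. int n0 \<le> \<bar>n\<bar> \<Longrightarrow> (n + int p \<in> S \<longleftrightarrow> n \<in> S)"
    unfolding is_period_def by blast
  have shift: "n + int j * int p \<in> S \<longleftrightarrow> n \<in> S"
    if "int (n0 + p * k) \<le> \<bar>n\<bar>" "j \<le> k" for n j
    using that(2)
  proof (induction j)
    case (Suc j)
    have "int j * int p + int p \<le> int k * int p"
      using Suc.prems mult_right_mono[of "int j + 1" "int k" "int p"] by (simp add: algebra_simps)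
    moreover have "int (n0 + p * k) = int n0 + int k * int p" "0 \<le> int j * int p"
      by simp_all
    ultimately have "int n0 \<le> \<bar>n + int j * int p\<bar>"
      using that(1) by linarith
    then have "n + int j * int p + int p \<in> S \<longleftrightarrow> n \<in> S"
      using n0 Suc by simp
    moreover have "n + int (Suc j) * int p = n + int j * int p + int p"
      by (simp add: algebra_simps)
    ultimately show ?case
      by (simp add: add.assoc)
  qed simp
  show ?thesis
    unfolding is_period_def
    using assms(2) p shift[of _ k] by (intro conjI exI[of _ "n0 + p * k"]) (auto simp: mult.commute)
qed

lemma is_period_Compl: "is_period S p \<Longrightarrow> is_period (- S) p"
  unfolding is_period_def by auto

lemma is_period_combine:
  assumes "is_period A p" "is_period B q" "\<And>n. n \<in> C \<longleftrightarrow> f (n \<in> A) (n \<in> B)"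
  shows "is_period C (p * q)"
proof -
  have "is_period A (p * q)" "is_period B (p * q)"
    using is_period_mult[OF assms(1) is_period_ge_1[OF assms(2)]]
      is_period_mult[OF assms(2) is_period_ge_1[OF assms(1)]]
    by (simp_all add: mult.commute)
  then obtain a b where "1 \<le> p * q"
    and "\<forall>n::int. int a \<le> \<bar>n\<bar> \<longrightarrow> (n + int (p * q) \<in> A \<longleftrightarrow> n \<in> A)"
    and "\<forall>n::int. int b \<le> \<bar>n\<bar> \<longrightarrow> (n + int (p * q) \<in> B \<longleftrightarrow> n \<in> B)"
    unfolding is_period_def by blast
  then show ?thesis
    unfolding is_period_def assms(3) by (intro conjI exI[of _ "a + b"]) auto
qed

lemma is_period_1_if_sign_determined:
  assumes "\<And>n::int. int N \<le> \<bar>n\<bar> \<Longrightarrow> n \<in> S \<longleftrightarrow> P (0 < n)"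
  shows "is_period S 1"
  unfolding is_period_def
proof (intro conjI exI[of _ "N + 1"] allI impI)
  fix n :: int
  assume "int (N + 1) \<le> \<bar>n\<bar>"
  then have "int N \<le> \<bar>n + 1\<bar>" "int N \<le> \<bar>n\<bar>" "0 < n + 1 \<longleftrightarrow> 0 < n"
    by auto
  then show "n + int 1 \<in> S \<longleftrightarrow> n \<in> S"
    using assms by simp
qed simp

lemma abs_le_abs_mult:
  assumes "(A::int) \<noteq> 0"
  shows "\<bar>n\<bar> \<le> \<bar>A * n\<bar>"
proof -
  have "1 \<le> \<bar>A\<bar>"
    using assms by linarith
  then show ?thesis
    by (simp add: abs_mult mult_le_cancel_right1)
qed

lemma is_period_linear_le: "is_period {n::int. A * n \<le> b} 1"
proof (rule is_period_1_if_sign_determined)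
  fix n :: int
  assume "int (nat \<bar>b\<bar> + 1) \<le> \<bar>n\<bar>"
  then have far: "\<bar>b\<bar> < \<bar>n\<bar>" by simp
  show "n \<in> {n. A * n \<le> b} \<longleftrightarrow> (if A = 0 then 0 \<le> b else (A < 0 \<longleftrightarrow> 0 < n))"
  proof (cases "A = 0")
    case False
    then have "\<bar>b\<bar> < \<bar>A * n\<bar>"
      using far abs_le_abs_mult[of A n] by linarith
    then have "A * n \<le> b \<longleftrightarrow> A * n < 0"
      by linarith
    also have "\<dots> \<longleftrightarrow> (A < 0 \<longleftrightarrow> 0 < n)"
      using far False by (auto simp: mult_less_0_iff)
    finally show ?thesis
      using False by simp
  qed simp
qed

lemma is_period_linear_eq: "is_period {n::int. A * n = b} 1"
proof (rule is_period_1_if_sign_determined)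
  fix n :: int
  assume "int (nat \<bar>b\<bar> + 1) \<le> \<bar>n\<bar>"
  then have far: "\<bar>b\<bar> < \<bar>n\<bar>" by simp
  show "n \<in> {n. A * n = b} \<longleftrightarrow> (\<lambda>_. A = 0 \<and> b = 0) (0 < n)"
  proof (cases "A = 0")
    case False
    then have "\<bar>b\<bar> < \<bar>A * n\<bar>"
      using far abs_le_abs_mult[of A n] by linarith
    then show ?thesis
      using False by auto
  qed simp
qed

lemma is_period_linear_mod:
  "1 \<le> c \<Longrightarrow> is_period {n::int. A * n mod int c = b} c"
  unfolding is_period_def by (auto simp: distrib_left)

lemma less_power_bitlen: "n < 2 ^ bitlen n"
proof (induction n rule: bitlen.induct)
  case (1 n)
  show ?case
  proof (cases "n < 2")
    case False
    then have "n div 2 < 2 ^ bitlen (n div 2)"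
      using "1" by simp
    then show ?thesis
      using False by simp
  qed simp
qed

definition coeff :: "lterm \<Rightarrow> nat \<Rightarrow> int" where
  "coeff t v = (\<Sum>(a, i)\<leftarrow>t. if i = v then a else 0)"

lemma tval_single_var: "tval t (\<lambda>i. if i = v then n else 0) = coeff t v * n"
  unfolding tval_def coeff_def by (induction t) (auto simp: algebra_simps)

lemma defined_set_Le: "defined_set (Le t b) v = {n. coeff t v * n \<le> b}"
  by (simp add: defined_set_def tval_single_var)

lemma defined_set_Cong:
  "defined_set (Cong t b c) v = {n. coeff t v * n mod int c = b mod int c}"
  by (simp add: defined_set_def tval_single_var)

lemma defined_set_Neg: "defined_set (Neg \<phi>) v = - defined_set \<phi> v"
  by (auto simp: defined_set_def)

lemma mem_defined_set_Conj:
  "n \<in> defined_set (Conj \<phi> \<psi>) v \<longleftrightarrow> n \<in> defined_set \<phi> v \<and> n \<in> defined_set \<psi> v"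
  by (simp add: defined_set_def)

lemma mem_defined_set_Disj:
  "n \<in> defined_set (Disj \<phi> \<psi>) v \<longleftrightarrow> n \<in> defined_set \<phi> v \<or> n \<in> defined_set \<psi> v"
  by (simp add: defined_set_def)

lemma mult_le_power_Suc_add:
  fixes p q :: nat
  assumes "p \<le> 2 ^ k" "q \<le> 2 ^ l"
  shows "p * q \<le> 2 ^ (1 + k + l)"
proof -
  have "p * q \<le> 2 ^ k * 2 ^ l"
    using assms by (rule mult_le_mono)
  then show ?thesis
    by (simp add: power_add)
qed

lemma defined_set_has_period_le_power_size:
  "\<exists>p. is_period (defined_set \<phi> v) p \<and> p \<le> 2 ^ size_f \<phi>"
proof (induction \<phi>)
  case (Le t b)
  have "is_period (defined_set (Le t b) v) 1"
    unfolding defined_set_Le by (rule is_period_linear_le)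
  then show ?case
    by (intro exI[of _ 1]) simp
next
  case (Cong t b c)
  show ?case
  proof (cases "c = 0")
    case True
    \<comment> \<open>x mod 0 = x, so a congruence modulo 0 is an equation\<close>
    then have "is_period (defined_set (Cong t b c) v) 1"
      unfolding defined_set_Cong using is_period_linear_eq by simp
    then show ?thesis
      by (intro exI[of _ 1]) simp
  next
    case False
    have "c < 2 ^ bitlen c"
      by (rule less_power_bitlen)
    also have "\<dots> \<le> 2 ^ size_f (Cong t b c)"
      by (rule power_increasing) (simp_all del: bitlen.simps)  \<comment> \<open>bitlen.simps loops\<close>
    finally have "c \<le> 2 ^ size_f (Cong t b c)"
      by (rule less_imp_le)
    moreover have "is_period (defined_set (Cong t b c) v) c"
      unfolding defined_set_Cong using False by (intro is_period_linear_mod) simp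
    ultimately show ?thesis
      by blast
  qed
next
  case (Neg \<phi>)
  then obtain p where "is_period (defined_set \<phi> v) p" "p \<le> 2 ^ size_f \<phi>"
    by blast
  moreover have "(2::nat) ^ size_f \<phi> \<le> 2 ^ size_f (Neg \<phi>)"
    by (rule power_increasing) simp_all
  ultimately show ?case
    by (auto simp: defined_set_Neg intro: is_period_Compl)
next
  case (Conj \<phi> \<psi>)
  then obtain p q where p: "is_period (defined_set \<phi> v) p" "p \<le> 2 ^ size_f \<phi>"
    and q: "is_period (defined_set \<psi> v) q" "q \<le> 2 ^ size_f \<psi>"
    by blast
  show ?case
    using is_period_combine[where f = "(\<and>)", OF p(1) q(1) mem_defined_set_Conj]
      mult_le_power_Suc_add[OF p(2) q(2)]
    by auto
next
  case (Disj \<phi> \<psi>)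
  then obtain p q where p: "is_period (defined_set \<phi> v) p" "p \<le> 2 ^ size_f \<phi>"
    and q: "is_period (defined_set \<psi> v) q" "q \<le> 2 ^ size_f \<psi>"
    by blast
  show ?case
    using is_period_combine[where f = "(\<or>)", OF p(1) q(1) mem_defined_set_Disj]
      mult_le_power_Suc_add[OF p(2) q(2)]
    by auto
qed

theorem lemma6p1:
  fixes \<phi> :: qf_pres and v :: nat
  assumes "fv \<phi> = {v}"
  shows "min_period (defined_set \<phi> v) \<le> 2 ^ size_f \<phi>"
proof -
  obtain p where "is_period (defined_set \<phi> v) p" "p \<le> 2 ^ size_f \<phi>"
    using defined_set_has_period_le_power_size by blast
  then show ?thesis
    using min_period_le order_trans by blast
qed

end
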